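(* Let $T:X\to Y$ be a linear operator between Archimedean vector lattices. Then $T$ satisfies condition $(\beta)$ if and only if $T$ satisfies condition $(\beta_0)$.
   Context: All vector lattices are Archimedean. For a subset $A$ of a vector lattice $X$, $A^d=\{x\in X: |x|\wedge|a|=0 \text{ for all } a\in A\}$ and $A^{dd}=(A^d)^d$. For $a,b\in X$ we write $a\lhd b$ if $\{a\}^{dd}\subseteq\{b\}^{dd}$; $a$ and $b$ are of the same width if $\{a\}^{dd}=\{b\}^{dd}$. A linear operator $T$ satisfies condition $(\beta)$ if $Ta\lhd Tb$ whenever $a\lhd b$. It satisfies condition $(\beta_0)$ if whenever $a,b\in X$ are of the same width, $Ta$ and $Tb$ are of the same width in $Y$. *)

theory Defs
  imports "HOL-Analysis.Analysis"
begin

text \<open>Vector lattices (Riesz spaces) are modelled by types of class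
  ordered_real_vector that are also lattices.\<close>

definition vabs :: "'a::{ordered_real_vector, lattice} \<Rightarrow> 'a" where
  "vabs x = sup x (- x)"

definition vl_archimedean :: "'a::{ordered_real_vector, lattice} itself \<Rightarrow> bool" where
  "vl_archimedean _ \<longleftrightarrow>
     (\<forall>x y :: 'a. 0 \<le> x \<and> (\<forall>n::nat. real n *\<^sub>R x \<le> y) \<longrightarrow> x = 0)"

definition disj_compl :: "'a::{ordered_real_vector, lattice} set \<Rightarrow> 'a set" where
  "disj_compl A = {x. \<forall>a\<in>A. inf (vabs x) (vabs a) = 0}"

definition bidisj :: "'a::{ordered_real_vector, lattice} set \<Rightarrow> 'a set" where
  "bidisj A = disj_compl (disj_compl A)"

definition dlhd :: "'a::{ordered_real_vector, lattice} \<Rightarrow> 'a \<Rightarrow> bool" where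
  "dlhd a b \<longleftrightarrow> bidisj {a} \<subseteq> bidisj {b}"

definition same_width :: "'a::{ordered_real_vector, lattice} \<Rightarrow> 'a \<Rightarrow> bool" where
  "same_width a b \<longleftrightarrow> bidisj {a} = bidisj {b}"

definition cond_beta ::
  "('a::{ordered_real_vector, lattice} \<Rightarrow> 'b::{ordered_real_vector, lattice}) \<Rightarrow> bool" where
  "cond_beta T \<longleftrightarrow> (\<forall>a b. dlhd a b \<longrightarrow> dlhd (T a) (T b))"

definition cond_beta0 ::
  "('a::{ordered_real_vector, lattice} \<Rightarrow> 'b::{ordered_real_vector, lattice}) \<Rightarrow> bool" where
  "cond_beta0 T \<longleftrightarrow> (\<forall>a b. same_width a b \<longrightarrow> same_width (T a) (T b))"

end

theory Submission
  imports Defs "HOL-Library.Lattice_Algebras"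
begin

text \<open>Write \<open>D x\<close> for \<open>{x}\<^sup>d\<close>. Then \<open>a \<lhd> b\<close> means \<open>D b \<subseteq> D a\<close>, and having the same width means
  \<open>D a = D b\<close>; so (\<open>\<beta>\<close>) trivially implies (\<open>\<beta>\<^sub>0\<close>). Conversely, \<open>D\<close> only depends on the
  modulus, is antitone in it, and turns sums of positive elements into intersections. Hence if
  \<open>a \<lhd> b\<close> and \<open>c = |a| + |b|\<close>, both \<open>c\<close> and \<open>a + c\<close> have the same width as \<open>b\<close>. By (\<open>\<beta>\<^sub>0\<close>)
  so do \<open>T c\<close> and \<open>T (a + c)\<close> with \<open>T b\<close>, and then \<open>T a = T (a + c) - T c\<close> satisfies
  \<open>D (T b) \<subseteq> D (T a)\<close>.\<close>

lemma vabs_lattice_ab_group_add_abs: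
  "class.lattice_ab_group_add_abs (vabs :: 'a::{ordered_real_vector, lattice} \<Rightarrow> 'a)
     (+) 0 (-) uminus (\<le>) (<) inf sup"
  by unfold_locales (auto simp: vabs_def)

lemma
  fixes x y z :: "'a::{ordered_real_vector, lattice}"
  shows vabs_nonneg: "0 \<le> vabs x"
    and vabs_of_nonneg: "0 \<le> x \<Longrightarrow> vabs x = x"
    and vabs_vabs: "vabs (vabs x) = vabs x"
    and le_vabs: "x \<le> vabs x"
    and neg_le_vabs: "- x \<le> vabs x"
    and vabs_diff_le: "vabs (x - y) \<le> vabs x + vabs y"
    and add_inf_distrib: "x + inf y z = inf (x + y) (x + z)"
proof -
  interpret lattice_ab_group_add_abs "vabs :: 'a \<Rightarrow> 'a" "(+)" 0 "(-)" uminus "(\<le>)" "(<)" inf sup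
    by (rule vabs_lattice_ab_group_add_abs)
  show "0 \<le> vabs x" "vabs (vabs x) = vabs x" by simp_all
  show "x \<le> vabs x" by (rule abs_ge_self)
  show "- x \<le> vabs x" by (rule abs_ge_minus_self)
  show "0 \<le> x \<Longrightarrow> vabs x = x" by (rule abs_of_nonneg)
  show "vabs (x - y) \<le> vabs x + vabs y" by (rule abs_triangle_ineq4)
  show "x + inf y z = inf (x + y) (x + z)" by (rule add_inf_distrib_left)
qed

lemma inf_add_le_add_inf:
  fixes u p q :: "'a::{ordered_real_vector, lattice}"
  assumes "0 \<le> u" "0 \<le> p" "0 \<le> q"
  shows "inf u (p + q) \<le> inf u p + inf u q"
proof -
  have "inf u p + inf u q = inf (inf u p + u) (inf u p + q)"
    by (rule add_inf_distrib)
  also have "\<dots> = inf (inf (u + u) (p + u)) (inf (u + q) (p + q))"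
    using add_inf_distrib[of u u p] add_inf_distrib[of q u p] by (simp add: add.commute)
  finally show ?thesis
    using assms by (simp add: le_infI1 add_increasing add_increasing2)
qed

lemma disj_compl_antimono: "A \<subseteq> B \<Longrightarrow> disj_compl B \<subseteq> disj_compl A"
  unfolding disj_compl_def by auto

lemma subset_bidisj: "A \<subseteq> bidisj A"
  unfolding bidisj_def disj_compl_def by (auto simp: inf_commute)

lemma disj_compl_bidisj: "disj_compl (bidisj A) = disj_compl A"
  unfolding bidisj_def
  by (rule order.antisym) (rule disj_compl_antimono subset_bidisj[unfolded bidisj_def])+

lemma dlhd_iff_disj_compl: "dlhd a b \<longleftrightarrow> disj_compl {b} \<subseteq> disj_compl {a}"
proof
  assume "dlhd a b"
  then have "disj_compl (bidisj {b}) \<subseteq> disj_compl (bidisj {a})"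
    unfolding dlhd_def by (rule disj_compl_antimono)
  then show "disj_compl {b} \<subseteq> disj_compl {a}"
    by (simp only: disj_compl_bidisj)
next
  assume "disj_compl {b} \<subseteq> disj_compl {a}"
  then show "dlhd a b"
    unfolding dlhd_def bidisj_def by (rule disj_compl_antimono)
qed

lemma same_width_iff_disj_compl: "same_width a b \<longleftrightarrow> disj_compl {a} = disj_compl {b}"
  by (metis same_width_def bidisj_def disj_compl_bidisj)

lemma mem_disj_compl_singleton: "z \<in> disj_compl {x} \<longleftrightarrow> inf (vabs z) (vabs x) = 0"
  by (simp add: disj_compl_def)

lemma disj_compl_vabs: "disj_compl {vabs x} = disj_compl {x}"
  by (simp add: disj_compl_def vabs_vabs)

lemma disj_compl_antimono_vabs:
  assumes "vabs x \<le> vabs y"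
  shows "disj_compl {y} \<subseteq> disj_compl {x}"
proof
  fix z assume "z \<in> disj_compl {y}"
  then have "inf (vabs z) (vabs x) \<le> 0"
    using inf_mono[OF order.refl assms, of "vabs z"] by (simp add: mem_disj_compl_singleton)
  then show "z \<in> disj_compl {x}"
    by (simp add: mem_disj_compl_singleton order.antisym vabs_nonneg)
qed

lemma disj_compl_add_nonneg:
  fixes p q :: "'a::{ordered_real_vector, lattice}"
  assumes "0 \<le> p" "0 \<le> q"
  shows "disj_compl {p + q} = disj_compl {p} \<inter> disj_compl {q}"
proof
  have "vabs p \<le> vabs (p + q)" "vabs q \<le> vabs (p + q)"
    using assms by (simp_all add: vabs_of_nonneg add_increasing add_increasing2)
  then show "disj_compl {p + q} \<subseteq> disj_compl {p} \<inter> disj_compl {q}"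
    by (auto dest: disj_compl_antimono_vabs)
  show "disj_compl {p} \<inter> disj_compl {q} \<subseteq> disj_compl {p + q}"
  proof
    fix z assume "z \<in> disj_compl {p} \<inter> disj_compl {q}"
    then have "inf (vabs z) (p + q) \<le> 0"
      using inf_add_le_add_inf[OF vabs_nonneg[of z] assms]
      by (simp add: mem_disj_compl_singleton vabs_of_nonneg assms)
    then show "z \<in> disj_compl {p + q}"
      using assms by (simp add: mem_disj_compl_singleton vabs_of_nonneg vabs_nonneg order.antisym)
  qed
qed

lemma disj_compl_diff: "disj_compl {x} \<inter> disj_compl {y} \<subseteq> disj_compl {x - y}"
proof -
  have "disj_compl {x} \<inter> disj_compl {y} = disj_compl {vabs x + vabs y}"
    by (simp add: disj_compl_add_nonneg vabs_nonneg disj_compl_vabs)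
  also have "\<dots> \<subseteq> disj_compl {x - y}"
    by (rule disj_compl_antimono_vabs)
      (simp add: vabs_of_nonneg vabs_nonneg add_nonneg_nonneg vabs_diff_le)
  finally show ?thesis .
qed

lemma same_width_diff_dlhd:
  assumes "same_width p w" "same_width q w"
  shows "dlhd (p - q) w"
  using assms disj_compl_diff[of p q] by (simp add: dlhd_iff_disj_compl same_width_iff_disj_compl)

lemma dlhd_same_width_vabs_add:
  assumes "dlhd a b"
  shows "same_width (vabs a + vabs b) b"
  using assms
  by (auto simp: same_width_iff_disj_compl dlhd_iff_disj_compl disj_compl_add_nonneg
      vabs_nonneg disj_compl_vabs)

lemma dlhd_same_width_add_vabs_add:
  assumes "dlhd a b"
  shows "same_width (a + (vabs a + vabs b)) b"
proof -
  define c where "c = vabs a + vabs b"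
  have "a + - a \<le> a + vabs a"
    by (rule add_left_mono[OF neg_le_vabs])
  then have "vabs b \<le> (a + vabs a) + vabs b"
    by (intro add_increasing[of "a + vabs a"]) simp_all
  then have lower: "vabs b \<le> a + c"
    by (simp add: c_def add.assoc)
  then have nonneg: "0 \<le> a + c"
    using vabs_nonneg order.trans by blast
  have upper: "a + c \<le> vabs a + c"
    by (rule add_right_mono[OF le_vabs])
  have "disj_compl {c} = disj_compl {b}"
    using dlhd_same_width_vabs_add[OF assms] by (simp add: c_def same_width_iff_disj_compl)
  then have "disj_compl {vabs a + c} = disj_compl {b}"
    using assms by (auto simp: disj_compl_add_nonneg vabs_nonneg c_def disj_compl_vabs
        dlhd_iff_disj_compl)
  moreover have "disj_compl {vabs a + c} \<subseteq> disj_compl {a + c}"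
    using upper nonneg
    by (intro disj_compl_antimono_vabs) (simp add: vabs_of_nonneg c_def add_nonneg_nonneg vabs_nonneg)
  moreover have "disj_compl {a + c} \<subseteq> disj_compl {b}"
    using lower nonneg by (intro disj_compl_antimono_vabs) (simp add: vabs_of_nonneg)
  ultimately show ?thesis
    unfolding c_def same_width_iff_disj_compl by blast
qed

theorem theorem4p2:
  fixes T :: "'a::{ordered_real_vector, lattice} \<Rightarrow> 'b::{ordered_real_vector, lattice}"
  assumes "vl_archimedean TYPE('a)" and "vl_archimedean TYPE('b)"
    and "linear T"
  shows "cond_beta T \<longleftrightarrow> cond_beta0 T"
proof
  assume "cond_beta T"
  then show "cond_beta0 T"
    unfolding cond_beta_def cond_beta0_def same_width_def dlhd_def by blast
next
  assume beta0: "cond_beta0 T"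
  show "cond_beta T" unfolding cond_beta_def
  proof (intro allI impI)
    fix a b :: 'a assume "dlhd a b"
    define c where "c = vabs a + vabs b"
    have "same_width (T (a + c)) (T b)" "same_width (T c) (T b)"
      using beta0 dlhd_same_width_add_vabs_add[OF \<open>dlhd a b\<close>] dlhd_same_width_vabs_add[OF \<open>dlhd a b\<close>]
      unfolding cond_beta0_def c_def by blast+
    moreover have "T (a + c) - T c = T a"
      using linear_add[OF \<open>linear T\<close>] by simp
    ultimately show "dlhd (T a) (T b)"
      using same_width_diff_dlhd by metis
  qed
qed

end
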